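(* Let $P_{\mathrm{T}}>0$, $\sigma^2>0$. For a beamformer $\mathbf{w}:\mathcal{S}_{\mathrm{T}}\to\mathbb{C}^{1\times N}$ define $\mathbf{e}(\mathbf{r})=\int_{\mathcal{S}_{\mathrm{T}}} h(\mathbf{r},\mathbf{s})\mathbf{w}(\mathbf{s})\,d\mathbf{s}$, $\mathbf{Q}=\int_{\mathcal{S}_{\mathrm{R}}}\mathbf{e}^H(\mathbf{r})\mathbf{e}(\mathbf{r})\,d\mathbf{r}$ and $\widetilde{\sigma}^2=\frac{\sigma^2}{P_{\mathrm{T}}}\int_{\mathcal{S}_{\mathrm{T}}}\|\mathbf{w}(\mathbf{s})\|^2d\mathbf{s}$. For a receiver $\mathbf{v}:\mathcal{S}_{\mathrm{R}}\to\mathbb{C}^{1\times N}$ define the MSE matrix $$\mathbf{E}=\left(\mathbf{I}_N-\int_{\mathcal{S}_{\mathrm{R}}}\mathbf{v}^H(\mathbf{r})\mathbf{e}(\mathbf{r})d\mathbf{r}\right)\left(\mathbf{I}_N-\int_{\mathcal{S}_{\mathrm{R}}}\mathbf{v}^H(\mathbf{r})\mathbf{e}(\mathbf{r})d\mathbf{r}\right)^H+\widetilde{\sigma}^2\int_{\mathcal{S}_{\mathrm{R}}}\mathbf{v}^H(\mathbf{r})\mathbf{v}(\mathbf{r})\,d\mathbf{r}.$$ Define a weight matrix $\mathbf{U}\succeq 0$ ($N\times N$ Hermitian). Then the optimal solution $\mathbf{w}$ of the problem $$\max_{\mathbf{w}(\mathbf{s})}\ \log\det\left(\mathbf{I}_N+\frac{1}{\widetilde{\sigma}^2}\mathbf{Q}\right)$$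 is identical to the optimal $\mathbf{w}$ of the problem $$\min_{\mathbf{w}(\mathbf{s}),\,\mathbf{v}(\mathbf{r}),\,\mathbf{U}}\ \mathrm{Tr}(\mathbf{U}\mathbf{E})-\log\det(\mathbf{U}).$$
   Context: $\mathcal{S}_{\mathrm{T}},\mathcal{S}_{\mathrm{R}}\subset\mathbb{R}^3$ are bounded planar rectangular surfaces (transmit and receive continuous aperture arrays) with surface (Lebesgue) integration; $h:\mathcal{S}_{\mathrm{R}}\times\mathcal{S}_{\mathrm{T}}\to\mathbb{C}$ is a bounded channel kernel; beamformers $\mathbf{w}$ (nonzero) and receivers $\mathbf{v}$ are square-integrable row-vector-valued functions; $\|\cdot\|$ is the Euclidean norm and $(\cdot)^H$ is conjugate transpose. *)

theory Defs
  imports "HOL-Analysis.Analysis"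
begin

text \<open>Planar rectangle in R^3 spanned by orthonormal u, v from corner c, sides a, b,
  together with its surface (Lebesgue) measure, obtained by pushing forward the
  2D Lebesgue measure on [0,a] x [0,b] along the isometric parametrisation.\<close>

definition rect_param :: "real^3 \<Rightarrow> real^3 \<Rightarrow> real^3 \<Rightarrow> real \<times> real \<Rightarrow> real^3" where
  "rect_param c u v = (\<lambda>(s, t). c + s *\<^sub>R u + t *\<^sub>R v)"

definition rect_aperture :: "(real^3) set \<Rightarrow> (real^3) measure \<Rightarrow> bool" where
  "rect_aperture S M \<longleftrightarrow> (\<exists>c u v a b. a > 0 \<and> b > 0 \<and> norm u = 1 \<and> norm v = 1 \<and> inner u v = 0
     \<and> S = rect_param c u v ` ({0..a} \<times> {0..b})
     \<and> M = distr (restrict_space lborel ({0..a} \<times> {0..b})) borel (rect_param c u v))"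

definition L2_fun :: "'a measure \<Rightarrow> ('a \<Rightarrow> complex^'n) \<Rightarrow> bool" where
  "L2_fun M f \<longleftrightarrow> f \<in> borel_measurable M \<and> integrable M (\<lambda>x. (norm (f x))\<^sup>2)"

definition cadj :: "complex^'n^'n \<Rightarrow> complex^'n^'n" where
  "cadj A = (\<chi> i j. cnj (A $ j $ i))"

definition hermitian :: "complex^'n^'n \<Rightarrow> bool" where
  "hermitian A \<longleftrightarrow> cadj A = A"

definition pos_def :: "complex^'n^'n \<Rightarrow> bool" where
  "pos_def A \<longleftrightarrow> hermitian A \<and>
     (\<forall>x. x \<noteq> 0 \<longrightarrow> 0 < Re (\<Sum>i\<in>UNIV. cnj (x $ i) * (A *v x) $ i))"

definition eff :: "'a measure \<Rightarrow> ('b \<Rightarrow> 'a \<Rightarrow> complex) \<Rightarrow> ('a \<Rightarrow> complex^'n) \<Rightarrow> 'b \<Rightarrow> complex^'n" where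
  "eff MT h w r = (\<chi> i. LINT s|MT. h r s * (w s $ i))"

definition outer_int :: "'a measure \<Rightarrow> ('a \<Rightarrow> complex^'n) \<Rightarrow> ('a \<Rightarrow> complex^'n) \<Rightarrow> complex^'n^'n" where
  "outer_int M f g = (\<chi> i j. LINT r|M. cnj (f r $ i) * (g r $ j))"

definition Qmat :: "'b measure \<Rightarrow> 'a measure \<Rightarrow> ('b \<Rightarrow> 'a \<Rightarrow> complex) \<Rightarrow> ('a \<Rightarrow> complex^'n) \<Rightarrow> complex^'n^'n" where
  "Qmat MR MT h w = outer_int MR (eff MT h w) (eff MT h w)"

definition sig_tilde :: "real \<Rightarrow> real \<Rightarrow> 'a measure \<Rightarrow> ('a \<Rightarrow> complex^'n) \<Rightarrow> real" where
  "sig_tilde PT sigma2 MT w = sigma2 / PT * (LINT s|MT. (norm (w s))\<^sup>2)"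

definition mse_mat :: "real \<Rightarrow> real \<Rightarrow> 'b measure \<Rightarrow> 'a measure \<Rightarrow> ('b \<Rightarrow> 'a \<Rightarrow> complex)
    \<Rightarrow> ('a \<Rightarrow> complex^'n) \<Rightarrow> ('b \<Rightarrow> complex^'n) \<Rightarrow> complex^'n^'n" where
  "mse_mat PT sigma2 MR MT h w v =
     (let D = mat 1 - outer_int MR v (eff MT h w)
      in D ** cadj D + sig_tilde PT sigma2 MT w *\<^sub>R outer_int MR v v)"

text \<open>Objective of the rate maximisation: log det (I + Q / sigma~^2). The determinant
  is real (positive) here; we take its real part to land in real numbers.\<close>
definition rate_obj :: "real \<Rightarrow> real \<Rightarrow> 'b measure \<Rightarrow> 'a measure \<Rightarrow> ('b \<Rightarrow> 'a \<Rightarrow> complex)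
    \<Rightarrow> ('a \<Rightarrow> complex^'n) \<Rightarrow> real" where
  "rate_obj PT sigma2 MR MT h w =
     ln (Re (det (mat 1 + (1 / sig_tilde PT sigma2 MT w) *\<^sub>R Qmat MR MT h w)))"

text \<open>WMMSE objective Tr(U E) - log det U (both terms are real for Hermitian U, E).\<close>
definition wmmse_obj :: "real \<Rightarrow> real \<Rightarrow> 'b measure \<Rightarrow> 'a measure \<Rightarrow> ('b \<Rightarrow> 'a \<Rightarrow> complex)
    \<Rightarrow> ('a \<Rightarrow> complex^'n) \<Rightarrow> ('b \<Rightarrow> complex^'n) \<Rightarrow> complex^'n^'n \<Rightarrow> real" where
  "wmmse_obj PT sigma2 MR MT h w v U =
     Re (trace (U ** mse_mat PT sigma2 MR MT h w v)) - ln (Re (det U))"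

definition admissible_bf :: "'a measure \<Rightarrow> ('a \<Rightarrow> complex^'n) \<Rightarrow> bool" where
  "admissible_bf MT w \<longleftrightarrow> L2_fun MT w \<and> (LINT s|MT. (norm (w s))\<^sup>2) > 0"

end

theory Submission
  imports Defs
begin

(* For a fixed beamformer w, with effective noise s = sig_tilde and Q the received Gram matrix,
   the WMMSE objective is minimised jointly over (v, U) by the MMSE receiver v = e (Q + s I)^-1
   and the weight U = I + Q / s, and its minimum is N - log det (I + Q / s), i.e. N minus the rate.
   Indeed, completing the square gives E(v) = s (Q + s I)^-1 + K K^H + s W with K K^H and W
   positive semidefinite, so E(v) dominates E0 = (I + Q / s)^-1; and for every U > 0,
   Tr (U E) - log det U >= Tr (U E0) - log det U >= N + log det E0, the last step being
   tr X - log det X >= N for X = L^H E0 L > 0, where U = L L^H. That inequality, as well as the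
   factorisation U = L L^H, comes from symmetric Gaussian elimination, so no spectral theorem is
   needed. Hence the rate and the minimised WMMSE objective differ by the constant N, and the two
   problems have the same optimal w. *)

section \<open>Conjugate transposes and elementary matrices\<close>

lemma cadj_component [simp]: "cadj A $ i $ j = cnj (A $ j $ i)"
  by (simp add: cadj_def)

lemma hermitian_component: "hermitian A \<Longrightarrow> cnj (A $ j $ i) = A $ i $ j"
  by (metis cadj_component hermitian_def)

lemma cadj_cadj [simp]: "cadj (cadj A) = A"
  by (simp add: vec_eq_iff)

lemma cadj_add: "cadj (A + B) = cadj A + cadj B"
  by (simp add: vec_eq_iff)

lemma cadj_diff: "cadj (A - B) = cadj A - cadj B"
  by (simp add: vec_eq_iff)

lemma scaleR_matrix_component: "(c *\<^sub>R A) $ i $ j = complex_of_real c * A $ i $ j"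
  by (simp only: vector_scaleR_component) (simp add: scaleR_conv_of_real)

lemma cadj_scaleR: "cadj (c *\<^sub>R A) = c *\<^sub>R cadj A"
  by (simp add: vec_eq_iff scaleR_matrix_component)

lemma cadj_mat_1 [simp]: "cadj (mat 1) = mat 1"
  by (simp add: vec_eq_iff mat_def)

lemma cadj_matrix_mult: "cadj (A ** B) = cadj B ** cadj A"
  by (simp add: vec_eq_iff matrix_matrix_mult_def mult.commute)

lemma matrix_add_rdistrib: "(A + B) ** C = A ** C + B ** (C :: 'a::semiring_1^'n^'m)"
  by (simp add: vec_eq_iff matrix_matrix_mult_def sum.distrib distrib_right)

lemma matrix_diff_ldistrib: "A ** (B - C) = A ** B - A ** (C :: 'a::ring_1^'n^'m)"
  by (simp add: vec_eq_iff matrix_matrix_mult_def sum_subtractf right_diff_distrib)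

lemma matrix_diff_rdistrib: "(A - B) ** C = A ** C - B ** (C :: 'a::ring_1^'n^'m)"
  by (simp add: vec_eq_iff matrix_matrix_mult_def sum_subtractf left_diff_distrib)

lemma matrix_vector_mult_scaleR_complex: "(c *\<^sub>R A) *v x = complex_of_real c *s (A *v x)"
  unfolding matrix_vector_mult_def scaleR_matrix_component
  by (simp add: vec_eq_iff sum_distrib_left mult.assoc)

lemma matrix_vector_mult_smult: "A *v (c *s x) = c *s (A *v x :: 'a::comm_ring_1^'m)"
  by (simp add: vec_eq_iff matrix_vector_mult_def algebra_simps sum_distrib_left)

lemma matrix_vector_mult_axis: "(A *v axis k 1) $ i = A $ i $ k"
  by (simp add: matrix_vector_mult_def axis_def if_distrib cong: if_cong)

lemma matrix_inv_right: "invertible A \<Longrightarrow> A ** matrix_inv A = mat 1"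
  unfolding invertible_def matrix_inv_def by (rule someI2_ex) auto

lemma det_unit_row:
  fixes u :: "'a::field^'n"
  assumes "u$k = 1"
  shows "det (\<chi> i. if i = k then u else axis i 1) = 1"
proof -
  let ?I = "mat 1 :: 'a^'n^'n"
  have row_I: "row i ?I = axis i 1" for i
    by (simp add: vec_eq_iff row_def mat_def axis_def)
  define u0 where "u0 = u - axis k 1"
  have "u0 = (\<Sum>j\<in>UNIV. u0$j *s axis j 1)" by (rule basis_expansion[symmetric])
  also have "\<dots> = (\<Sum>j\<in>UNIV - {k}. u0$j *s row j ?I)"
    using assms by (simp add: sum.remove[of UNIV k] u0_def row_I)
  finally have "u0 \<in> vec.span {row j ?I |j. j \<noteq> k}"
    by (metis (mono_tags, lifting) DiffD2 insertI1 mem_Collect_eq vec.span_base vec.span_scale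
        vec.span_sum)
  from det_row_span[OF this] show ?thesis
    by (simp add: u0_def row_I cong: if_cong)
qed

lemma matrix_mult_unit_row:
  fixes M :: "'a::comm_ring_1^'n^'m"
  shows "(M ** (\<chi> i. if i = k then u else axis i 1))$p$j
           = (if j = k then M$p$k * u$k else M$p$j + M$p$k * u$j)"
proof -
  have "(M ** (\<chi> i. if i = k then u else axis i 1))$p$j
      = M$p$k * u$j + (\<Sum>q\<in>UNIV-{k}. M$p$q * axis q 1 $ j)"
    unfolding matrix_matrix_mult_def by (simp add: sum.remove[of UNIV k] del: axis_nth)
  also have "(\<Sum>q\<in>UNIV-{k}. M$p$q * axis q 1 $ j) = (\<Sum>q\<in>UNIV-{k}. if q = j then M$p$q else 0)"
    by (rule sum.cong) (simp_all add: axis_def)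
  finally show ?thesis by simp
qed

lemma transpose_unit_row_mult:
  fixes M :: "'a::comm_ring_1^'n^'m"
  shows "(transpose (\<chi> i. if i = k then u else axis i 1) ** M)$i$j
           = (if i = k then u$k * M$k$j else M$i$j + u$i * M$k$j)"
proof -
  have "(transpose (\<chi> i. if i = k then u else axis i 1) ** M)$i$j
      = u$i * M$k$j + (\<Sum>q\<in>UNIV-{k}. axis q 1 $ i * M$q$j)"
    unfolding matrix_matrix_mult_def
    by (simp add: sum.remove[of UNIV k] transpose_def del: axis_nth)
  also have "(\<Sum>q\<in>UNIV-{k}. axis q 1 $ i * M$q$j) = (\<Sum>q\<in>UNIV-{k}. if q = i then M$q$j else 0)"
    by (rule sum.cong) (simp_all add: axis_def)
  finally show ?thesis by simp
qed

lemma det_eliminate_pivot: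
  fixes A :: "'a::field^'n^'n"
  assumes d: "A$k$k \<noteq> 0"
  shows "det A = A$k$k * det (\<chi> i j. if i = k \<or> j = k then (if i = j then 1 else 0)
                                     else A$i$j - A$i$k * A$k$j / A$k$k)"
    (is "_ = _ * det ?B")
proof -
  let ?d = "A$k$k" and ?R = "\<lambda>u. \<chi> i. if i = k then u else axis i 1"
  define c where "c = (\<chi> i. A$i$k / ?d)"
  define r where "r = (\<chi> j. A$k$j / ?d)"
  define D where "D = (\<chi> i j. if i = k \<and> j = k then ?d else ?B$i$j)"
  have "A = transpose (?R c) ** (D ** ?R r)"
    using d by (auto simp: vec_eq_iff matrix_mult_unit_row transpose_unit_row_mult c_def r_def D_def)
  moreover have "det (?R c) = 1" "det (?R r) = 1"
    using d by (simp_all add: det_unit_row c_def r_def)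
  moreover have "D = (\<chi> i. if i = k then ?d *s row i ?B else row i ?B)"
    by (auto simp: vec_eq_iff D_def row_def)
  then have "det D = ?d * det ?B"
    using det_row_mul[of k ?d "\<lambda>i. row i ?B" "\<lambda>i. row i ?B"] by (simp add: row_def)
  ultimately show ?thesis by (simp add: det_mul)
qed

section \<open>Hermitian forms\<close>

definition cinner :: "complex^'n \<Rightarrow> complex^'n \<Rightarrow> complex" where
  "cinner x y = (\<Sum>i\<in>UNIV. cnj (x$i) * y$i)"

definition qform :: "complex^'n^'n \<Rightarrow> complex^'n \<Rightarrow> real" where
  "qform A x = Re (cinner x (A *v x))"

lemma pos_def_iff_qform: "pos_def A \<longleftrightarrow> hermitian A \<and> (\<forall>x. x \<noteq> 0 \<longrightarrow> 0 < qform A x)"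
  by (simp add: pos_def_def qform_def cinner_def)

lemma cinner_cadj: "cinner x (cadj A *v y) = cinner (A *v x) y"
proof -
  have "cinner x (cadj A *v y) = (\<Sum>i\<in>UNIV. \<Sum>j\<in>UNIV. cnj (x$i) * (cnj (A$j$i) * y$j))"
    unfolding cinner_def matrix_vector_mult_def by (simp add: sum_distrib_left)
  also have "\<dots> = (\<Sum>j\<in>UNIV. \<Sum>i\<in>UNIV. cnj (A$j$i * x$i) * y$j)"
    by (subst sum.swap) (simp add: mult_ac)
  also have "\<dots> = cinner (A *v x) y"
    unfolding cinner_def matrix_vector_mult_def by (simp add: sum_distrib_right)
  finally show ?thesis .
qed

lemma cinner_axis_left: "cinner (axis k 1) z = z $ k"
proof -
  have "cinner (axis k 1) z = (\<Sum>i\<in>UNIV. if i = k then z$i else 0)"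
    unfolding cinner_def axis_def by (rule sum.cong) auto
  then show ?thesis by simp
qed

lemma cinner_diff_left: "cinner (x - y) z = cinner x z - cinner y z"
  by (simp add: cinner_def algebra_simps sum_subtractf)

lemma cinner_scale_left: "cinner (c *s x) z = cnj c * cinner x z"
  by (simp add: cinner_def algebra_simps sum_distrib_left)

lemma cinner_scale_right: "cinner x (c *s z) = c * cinner x z"
  by (simp add: cinner_def algebra_simps sum_distrib_left)

lemma cinner_self: "cinner x x = complex_of_real (\<Sum>i\<in>UNIV. (cmod (x$i))\<^sup>2)"
  unfolding cinner_def of_real_sum
  by (rule sum.cong) (simp_all only: complex_norm_square mult.commute)

lemma cinner_self_pos: "x \<noteq> 0 \<Longrightarrow> 0 < Re (cinner x x)"
proof -
  assume "x \<noteq> 0"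
  then obtain i where "x $ i \<noteq> 0" by (metis vec_eq_iff zero_index)
  then have "0 < (\<Sum>j\<in>UNIV. (cmod (x$j))\<^sup>2)"
    by (intro sum_pos2[of UNIV i]) auto
  then show ?thesis by (simp add: cinner_self)
qed

lemma qform_add: "qform (A + B) x = qform A x + qform B x"
  by (simp add: qform_def cinner_def algebra_simps sum.distrib)

lemma qform_scaleR: "qform (c *\<^sub>R A) x = c * qform A x"
  by (simp add: qform_def matrix_vector_mult_scaleR_complex cinner_scale_right)

lemma qform_mat_1: "qform (mat 1) x = Re (cinner x x)"
  by (simp add: qform_def)

lemma qform_congruence: "qform (cadj L ** A ** L) x = qform A (L *v x)"
  by (simp add: qform_def cinner_cadj matrix_vector_mul_assoc[symmetric])

lemma qform_gram_nonneg: "0 \<le> qform (K ** cadj K) x"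
  using qform_congruence[of "cadj K" "mat 1" x] by (simp add: qform_mat_1 cinner_self sum_nonneg)

lemma qform_le_add_gram:
  assumes "E = E0 + K ** cadj K + c *\<^sub>R W" and "0 \<le> c" and "\<And>x. 0 \<le> qform W x"
  shows "qform E0 x \<le> qform E x"
  using assms(2) assms(3)[of x] qform_gram_nonneg[of K x] by (simp add: assms(1) qform_add qform_scaleR)

lemma trace_eq_sum_qform: "Re (trace A) = (\<Sum>i\<in>UNIV. qform A (axis i 1))"
  by (simp add: trace_def qform_def cinner_axis_left matrix_vector_mult_axis)

lemma pos_def_congruence:
  fixes A L :: "complex^'n^'n"
  assumes A: "pos_def A" and L: "det L \<noteq> 0"
  shows "pos_def (cadj L ** A ** L)"
  unfolding pos_def_iff_qform
proof (intro conjI allI impI)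
  show "hermitian (cadj L ** A ** L)"
    using A by (simp add: hermitian_def pos_def_def cadj_matrix_mult matrix_mul_assoc)
  fix x :: "complex^'n" assume "x \<noteq> 0"
  moreover have "\<exists>B. B ** L = mat 1"
    using L invertible_det_nz invertible_left_inverse by blast
  ultimately have "L *v x \<noteq> 0" using matrix_left_invertible_ker by blast
  then show "0 < qform (cadj L ** A ** L) x"
    using A by (simp add: qform_congruence pos_def_iff_qform)
qed

lemma pos_def_scaleR: "pos_def A \<Longrightarrow> 0 < c \<Longrightarrow> pos_def (c *\<^sub>R A)"
  by (simp add: pos_def_iff_qform hermitian_def cadj_scaleR qform_scaleR)

lemma pos_def_id_plus:
  fixes Q :: "complex^'n^'n"
  assumes "hermitian Q" and "\<And>x. 0 \<le> qform Q x" and "0 \<le> c"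
  shows "pos_def (mat 1 + c *\<^sub>R Q)"
  unfolding pos_def_iff_qform
proof (intro conjI allI impI)
  show "hermitian (mat 1 + c *\<^sub>R Q)"
    using assms(1) by (simp add: hermitian_def cadj_add cadj_scaleR)
  fix x :: "complex^'n" assume "x \<noteq> 0"
  then show "0 < qform (mat 1 + c *\<^sub>R Q) x"
    using cinner_self_pos[of x] assms(2)[of x] assms(3)
    by (simp add: qform_add qform_scaleR qform_mat_1 add_pos_nonneg)
qed

section \<open>Symmetric Gaussian elimination\<close>

definition pos_def_on :: "'n set \<Rightarrow> complex^'n^'n \<Rightarrow> bool" where
  "pos_def_on S X \<longleftrightarrow> hermitian X \<and> (\<forall>i j. i \<notin> S \<or> j \<notin> S \<longrightarrow> X$i$j = 0) \<and>
     (\<forall>x. x \<noteq> 0 \<and> (\<forall>i. i \<notin> S \<longrightarrow> x$i = 0) \<longrightarrow> 0 < qform X x)"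

text \<open>For \<open>X\<close> supported on \<open>S \<times> S\<close>, \<open>X + id_outside S\<close> pads \<open>X\<close> with the identity outside \<open>S\<close>,
  so its determinant is that of the \<open>S \<times> S\<close> block.\<close>

definition id_outside :: "'n set \<Rightarrow> 'a::zero_neq_one^'n^'n" where
  "id_outside S = (\<chi> i j. if i = j \<and> i \<notin> S then 1 else 0)"

definition dyad :: "complex^'n \<Rightarrow> complex^'n^'n" where
  "dyad g = (\<chi> i j. g$i * cnj (g$j))"

definition schur_compl :: "'n \<Rightarrow> 'a::field^'n^'n \<Rightarrow> 'a^'n^'n" where
  "schur_compl k X = (\<chi> i j. X$i$j - X$i$k * X$k$j / X$k$k)"

definition pivot_col :: "'n \<Rightarrow> complex^'n^'n \<Rightarrow> complex^'n" where
  "pivot_col k X = (1 / complex_of_real (sqrt (Re (X$k$k)))) *s column k X"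

lemma pos_def_on_UNIV: "pos_def_on UNIV X \<longleftrightarrow> pos_def X"
  by (simp add: pos_def_on_def pos_def_iff_qform)

lemma pos_def_on_empty: "pos_def_on {} X \<Longrightarrow> X = 0"
  by (simp add: pos_def_on_def vec_eq_iff)

lemma id_outside_empty [simp]: "id_outside {} = mat 1"
  by (simp add: id_outside_def mat_def vec_eq_iff)

lemma id_outside_UNIV [simp]: "id_outside UNIV = 0"
  by (simp add: id_outside_def vec_eq_iff)

lemma pos_def_on_pivot:
  assumes "pos_def_on (insert k S) X"
  shows "Im (X$k$k) = 0" "0 < Re (X$k$k)"
proof -
  have "cnj (X$k$k) = X$k$k"
    using assms hermitian_component unfolding pos_def_on_def by blast
  then show "Im (X$k$k) = 0" by (simp add: complex_eq_iff)
  have "0 < qform X (axis k 1)"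
    using assms unfolding pos_def_on_def by (auto simp: axis_def vec_eq_iff)
  then show "0 < Re (X$k$k)"
    by (simp add: qform_def cinner_axis_left matrix_vector_mult_axis)
qed

lemma qform_schur_compl:
  assumes d: "X$k$k \<noteq> 0" and xk: "x$k = 0"
  shows "qform (schur_compl k X) x = qform X (x - ((X *v x)$k / X$k$k) *s axis k 1)"
proof -
  define t where "t = (X *v x)$k / X$k$k"
  define y where "y = x - t *s axis k 1"
  have "(schur_compl k X *v x)$i = (X *v x)$i - X$i$k * t" for i
    by (simp add: schur_compl_def matrix_vector_mult_def t_def algebra_simps
        sum_subtractf sum_distrib_left sum_divide_distrib)
  moreover have Xy: "(X *v y)$i = (X *v x)$i - X$i$k * t" for i
    by (simp add: y_def matrix_vector_mult_diff_distrib matrix_vector_mult_smult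
        matrix_vector_mult_axis mult.commute)
  ultimately have "schur_compl k X *v x = X *v y" by (simp add: vec_eq_iff)
  moreover have "(X *v y)$k = 0" using d by (simp add: Xy t_def)
  ultimately have "cinner x (schur_compl k X *v x) = cinner y (X *v y)"
    by (simp add: y_def cinner_diff_left cinner_scale_left cinner_axis_left)
  then show ?thesis by (simp add: qform_def y_def t_def)
qed

lemma pos_def_on_schur_compl:
  fixes X :: "complex^'n^'n"
  assumes X: "pos_def_on (insert k S) X" and kS: "k \<notin> S"
  shows "pos_def_on S (schur_compl k X)"
proof -
  have herm: "\<And>i j. cnj (X$j$i) = X$i$j"
    using X hermitian_component unfolding pos_def_on_def by blast
  have zero: "\<And>i j. i \<notin> insert k S \<or> j \<notin> insert k S \<Longrightarrow> X$i$j = 0"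
    using X unfolding pos_def_on_def by blast
  have d: "X$k$k \<noteq> 0" using pos_def_on_pivot(2)[OF X] by auto
  show ?thesis
    unfolding pos_def_on_def
  proof (intro conjI allI impI)
    show "hermitian (schur_compl k X)"
      unfolding hermitian_def by (simp add: vec_eq_iff schur_compl_def herm mult.commute)
  next
    fix i j assume "i \<notin> S \<or> j \<notin> S"
    then show "schur_compl k X $ i $ j = 0"
      using d zero by (cases "i = k"; cases "j = k") (auto simp: schur_compl_def)
  next
    fix x :: "complex^'n" assume x: "x \<noteq> 0 \<and> (\<forall>i. i \<notin> S \<longrightarrow> x$i = 0)"
    define y where "y = x - ((X *v x)$k / X$k$k) *s axis k 1"
    obtain i where "x$i \<noteq> 0" using x by (metis vec_eq_iff zero_index)
    moreover have "i \<noteq> k" using calculation x kS by auto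
    ultimately have "y \<noteq> 0" by (auto simp: y_def vec_eq_iff axis_def)
    moreover have "\<forall>i. i \<notin> insert k S \<longrightarrow> y$i = 0"
      using x by (simp add: y_def axis_def)
    ultimately have "0 < qform X y" using X unfolding pos_def_on_def by blast
    moreover have "x$k = 0" using x kS by blast
    ultimately show "0 < qform (schur_compl k X) x"
      using qform_schur_compl[OF d] by (simp add: y_def)
  qed
qed

lemma schur_compl_add_dyad:
  assumes herm: "hermitian X" and re: "Im (X$k$k) = 0" and pos: "0 < Re (X$k$k)"
  shows "X = schur_compl k X + dyad (pivot_col k X)"
proof -
  define c where "c = complex_of_real (sqrt (Re (X$k$k)))"
  have cc: "c * c = X$k$k"
    using re pos by (simp add: c_def complex_eq_iff)
  have "pivot_col k X $ i * cnj (pivot_col k X $ j) = X$i$k * X$k$j / X$k$k" for i j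
    using hermitian_component[OF herm, of j k] cc
    by (simp add: pivot_col_def column_def c_def[symmetric] flip: of_real_mult)
      (simp add: c_def)
  then show ?thesis by (simp add: vec_eq_iff schur_compl_def dyad_def)
qed

lemma det_schur_compl:
  assumes d: "X$k$k \<noteq> 0" and kS: "k \<notin> S"
  shows "det (X + id_outside (insert k S)) = X$k$k * det (schur_compl k X + id_outside S)"
proof -
  define A where "A = X + id_outside (insert k S)"
  have "(\<chi> i j. if i = k \<or> j = k then (if i = j then 1 else 0) else A$i$j - A$i$k * A$k$j / A$k$k)
      = schur_compl k X + id_outside S"
  proof -
    have "(if i = k \<or> j = k then (if i = j then 1 else 0) else A$i$j - A$i$k * A$k$j / A$k$k)
        = (schur_compl k X + id_outside S)$i$j" for i j
      using d kS by (cases "i = k"; cases "j = k") (simp_all add: schur_compl_def id_outside_def A_def)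
    then show ?thesis by (simp add: vec_eq_iff)
  qed
  moreover have "A$k$k = X$k$k" by (simp add: A_def id_outside_def)
  ultimately show ?thesis
    using det_eliminate_pivot[of A k] d unfolding A_def by simp
qed

lemma trace_dyad: "Re (trace (dyad g)) = (\<Sum>i\<in>UNIV. (cmod (g$i))\<^sup>2)"
  by (simp add: trace_def dyad_def flip: complex_norm_square)

lemma pivot_le_trace_dyad:
  assumes "Im (X$k$k) = 0" and "0 < Re (X$k$k)"
  shows "Re (X$k$k) \<le> Re (trace (dyad (pivot_col k X)))"
proof -
  have "cmod (X$k$k) = Re (X$k$k)" using assms by (simp add: cmod_eq_Re)
  then have "Re (X$k$k) = (cmod (pivot_col k X $ k))\<^sup>2"
    using assms(2) by (simp add: pivot_col_def column_def norm_mult norm_divide power_divide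
        power2_eq_square)
  also have "\<dots> \<le> (\<Sum>i\<in>UNIV. (cmod (pivot_col k X $ i))\<^sup>2)"
    by (rule member_le_sum) auto
  finally show ?thesis by (simp add: trace_dyad)
qed

text \<open>Removing the pivot \<open>d = X$k$k\<close> splits off a rank-one term of trace at least \<open>d\<close> and a
  factor \<open>d\<close> of the determinant; as \<open>d - ln d \<ge> 1\<close>, every pivot contributes at least \<open>1\<close>.\<close>

lemma pos_def_on_trace_ln_det:
  assumes "finite S" and "pos_def_on S X"
  shows "Im (det (X + id_outside S)) = 0 \<and> 0 < Re (det (X + id_outside S)) \<and>
         real (card S) \<le> Re (trace X) - ln (Re (det (X + id_outside S)))"
  using assms
proof (induction S arbitrary: X rule: finite_induct)
  case empty
  then have "X = 0" by (rule pos_def_on_empty)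
  then show ?case by (simp add: trace_def)
next
  case (insert k S)
  let ?d = "X$k$k" and ?X' = "schur_compl k X"
  have d: "Im ?d = 0" "0 < Re ?d" using pos_def_on_pivot[OF insert.prems] by auto
  have IH: "Im (det (?X' + id_outside S)) = 0" "0 < Re (det (?X' + id_outside S))"
    "real (card S) \<le> Re (trace ?X') - ln (Re (det (?X' + id_outside S)))"
    using insert.IH[OF pos_def_on_schur_compl[OF insert.prems insert.hyps(2)]] by auto
  have herm: "hermitian X" using insert.prems by (simp add: pos_def_on_def)
  have det: "det (X + id_outside (insert k S)) = ?d * det (?X' + id_outside S)"
    using d by (intro det_schur_compl insert.hyps(2)) auto
  have tr: "Re (trace X) = Re (trace ?X') + Re (trace (dyad (pivot_col k X)))"
    by (subst schur_compl_add_dyad[OF herm d]) (simp add: trace_add)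
  have "1 \<le> Re ?d - ln (Re ?d)" using ln_le_minus_one[OF d(2)] by simp
  then show ?case
    using d IH pivot_le_trace_dyad[OF d] insert.hyps
    by (simp add: det tr ln_mult)
qed

lemma pos_def_on_sum_dyads:
  assumes "finite S" and "pos_def_on S X"
  shows "\<exists>c. X = (\<Sum>k\<in>S. dyad (c k))"
  using assms
proof (induction S arbitrary: X rule: finite_induct)
  case empty
  then show ?case using pos_def_on_empty by simp
next
  case (insert k S)
  obtain c where c: "schur_compl k X = (\<Sum>j\<in>S. dyad (c j))"
    using insert.IH[OF pos_def_on_schur_compl[OF insert.prems insert.hyps(2)]] by blast
  have "X = schur_compl k X + dyad (pivot_col k X)"
    using insert.prems pos_def_on_pivot[OF insert.prems]
    by (intro schur_compl_add_dyad) (auto simp: pos_def_on_def)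
  also have "\<dots> = (\<Sum>j\<in>insert k S. dyad ((c(k := pivot_col k X)) j))"
    using insert.hyps by (simp add: c add.commute, intro sum.cong) auto
  finally show ?case by blast
qed

lemma pos_def_det:
  assumes "pos_def X"
  shows "Im (det X) = 0" "0 < Re (det X)"
  using pos_def_on_trace_ln_det[of UNIV X] assms by (simp_all add: pos_def_on_UNIV)

lemma pos_def_trace_ln_det:
  assumes "pos_def (X :: complex^'n^'n)"
  shows "real CARD('n) \<le> Re (trace X) - ln (Re (det X))"
  using pos_def_on_trace_ln_det[of UNIV X] assms by (simp add: pos_def_on_UNIV)

lemma pos_def_gram_factor:
  assumes "pos_def (U :: complex^'n^'n)"
  obtains L where "U = L ** cadj L"
proof -
  obtain c :: "'n \<Rightarrow> complex^'n" where "U = (\<Sum>k\<in>UNIV. dyad (c k))"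
    using pos_def_on_sum_dyads[of UNIV U] assms by (auto simp: pos_def_on_UNIV)
  then have "U = (\<chi> i j. c j $ i) ** cadj (\<chi> i j. c j $ i)"
    by (simp add: vec_eq_iff matrix_matrix_mult_def dyad_def)
  then show ?thesis using that by blast
qed

section \<open>Trace and log-determinant bounds\<close>

lemma pos_def_right_inverse:
  assumes "pos_def (A :: complex^'n^'n)"
  obtains B where "A ** B = mat 1"
  using pos_def_det[OF assms] invertible_det_nz invertible_right_inverse
  by (metis zero_complex.sel(1) less_irrefl)

lemma pos_def_inverse:
  fixes A B :: "complex^'n^'n"
  assumes A: "pos_def A" and AB: "A ** B = mat 1"
  shows "pos_def B"
  unfolding pos_def_iff_qform
proof (intro conjI allI impI)
  have hA: "cadj A = A" using A by (simp add: pos_def_def hermitian_def)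
  have "cadj B = cadj B ** (A ** B)" by (simp add: AB)
  also have "\<dots> = cadj (A ** B) ** B" by (simp add: cadj_matrix_mult hA matrix_mul_assoc)
  finally show hB: "hermitian B" by (simp add: hermitian_def AB)
  fix x :: "complex^'n" assume "x \<noteq> 0"
  moreover have "A *v (B *v x) = x" by (simp add: matrix_vector_mul_assoc AB)
  ultimately have "B *v x \<noteq> 0" by auto
  then have "0 < qform A (B *v x)" using A by (simp add: pos_def_iff_qform)
  moreover have "cadj B ** A ** B = B"
    using hB AB matrix_left_right_inverse[of A B]
    by (simp add: hermitian_def flip: matrix_mul_assoc)
  ultimately show "0 < qform B x" by (metis qform_congruence)
qed

lemma ln_det_inverse:
  assumes "pos_def A" and "A ** B = mat 1"
  shows "ln (Re (det B)) = - ln (Re (det A))"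
proof -
  have "det A * det B = 1" by (metis assms(2) det_I det_mul)
  then have "Re (det A * det B) = 1" by simp
  then have "Re (det A) * Re (det B) = 1"
    using pos_def_det(1)[OF assms(1)] by simp
  then have "Re (det B) = inverse (Re (det A))"
    by (metis inverse_unique)
  then show ?thesis
    using pos_def_det(2)[OF assms(1)] by (simp add: ln_inverse)
qed

lemma trace_mult_mono:
  assumes "pos_def U" and "\<And>x. qform E0 x \<le> qform E x"
  shows "Re (trace (U ** E0)) \<le> Re (trace (U ** E))"
proof -
  obtain L where U: "U = L ** cadj L" using pos_def_gram_factor[OF assms(1)] .
  have tr: "Re (trace (U ** M)) = (\<Sum>i\<in>UNIV. qform M (L *v axis i 1))" for M
    unfolding U trace_eq_sum_qform[symmetric] qform_congruence[symmetric]
    by (metis matrix_mul_assoc trace_mul_sym)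
  show ?thesis unfolding tr by (intro sum_mono assms(2))
qed

lemma trace_ln_det_lower_bound:
  fixes U E0 :: "complex^'n^'n"
  assumes U: "pos_def U" and E0: "pos_def E0"
  shows "real CARD('n) + ln (Re (det E0)) \<le> Re (trace (U ** E0)) - ln (Re (det U))"
proof -
  obtain L where UL: "U = L ** cadj L" using pos_def_gram_factor[OF U] .
  define X where "X = cadj L ** E0 ** L"
  have "det U = det L * det (cadj L)" unfolding UL by (rule det_mul)
  then have "det L \<noteq> 0" using pos_def_det[OF U] by auto
  then have "real CARD('n) \<le> Re (trace X) - ln (Re (det X))"
    unfolding X_def by (intro pos_def_trace_ln_det pos_def_congruence E0)
  moreover have "trace X = trace (U ** E0)"
    unfolding X_def UL by (metis matrix_mul_assoc trace_mul_sym)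
  moreover have "det X = det E0 * det U"
    unfolding X_def UL by (simp add: det_mul)
  ultimately show ?thesis
    using pos_def_det[OF U] pos_def_det[OF E0] by (simp add: ln_mult)
qed

section \<open>Square-integrable functions and their Gram matrices\<close>

lemma L2_fun_bounded_linear:
  fixes T :: "complex^'n \<Rightarrow> complex^'m"
  assumes T: "bounded_linear T" and f: "L2_fun M f"
  shows "L2_fun M (\<lambda>x. T (f x))"
  unfolding L2_fun_def
proof
  obtain K where K: "\<And>y. norm (T y) \<le> norm y * K"
    using bounded_linear.bounded[OF T] by blast
  show meas: "(\<lambda>x. T (f x)) \<in> borel_measurable M"
    using f unfolding L2_fun_def
    by (auto intro: borel_measurable_continuous_on[OF bounded_linear.continuous_on[OF T continuous_on_id]])
  show "integrable M (\<lambda>x. (norm (T (f x)))\<^sup>2)"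
  proof (rule Bochner_Integration.integrable_bound)
    show "integrable M (\<lambda>x. K\<^sup>2 * (norm (f x))\<^sup>2)"
      using f unfolding L2_fun_def by simp
    show "AE x in M. norm ((norm (T (f x)))\<^sup>2) \<le> norm (K\<^sup>2 * (norm (f x))\<^sup>2)"
      using K by (intro AE_I2) (simp add: power_mult_distrib[symmetric] power_mono mult.commute)
  qed (use meas in measurable)
qed

lemma L2_fun_component_measurable:
  assumes "L2_fun M f"
  shows "(\<lambda>x. f x $ i) \<in> borel_measurable M"
  using assms unfolding L2_fun_def
  by (auto intro: borel_measurable_continuous_on[OF
        bounded_linear.continuous_on[OF bounded_linear_vec_nth continuous_on_id]])

lemma L2_fun_diff:
  assumes f: "L2_fun M f" and g: "L2_fun M g"
  shows "L2_fun M (\<lambda>x. f x - g x)"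
  unfolding L2_fun_def
proof
  show meas: "(\<lambda>x. f x - g x) \<in> borel_measurable M"
    using f g unfolding L2_fun_def by (intro borel_measurable_diff) auto
  show "integrable M (\<lambda>x. (norm (f x - g x))\<^sup>2)"
  proof (rule Bochner_Integration.integrable_bound)
    show "integrable M (\<lambda>x. 2 * (norm (f x))\<^sup>2 + 2 * (norm (g x))\<^sup>2)"
      using f g unfolding L2_fun_def by simp
    have "(norm (f x - g x))\<^sup>2 \<le> 2 * (norm (f x))\<^sup>2 + 2 * (norm (g x))\<^sup>2" for x
    proof -
      have "(norm (f x - g x))\<^sup>2 \<le> (norm (f x) + norm (g x))\<^sup>2"
        by (intro power_mono norm_triangle_ineq4) auto
      also have "\<dots> \<le> 2 * (norm (f x))\<^sup>2 + 2 * (norm (g x))\<^sup>2"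
        using sum_squares_bound[of "norm (f x)" "norm (g x)"] by (simp add: power2_sum)
      finally show ?thesis .
    qed
    then show "AE x in M. norm ((norm (f x - g x))\<^sup>2) \<le> norm (2 * (norm (f x))\<^sup>2 + 2 * (norm (g x))\<^sup>2)"
      by simp
  qed (use meas in measurable)
qed

lemma L2_fun_bounded:
  assumes "finite_measure M" and meas: "f \<in> borel_measurable M" and "AE x in M. norm (f x) \<le> K"
  shows "L2_fun M f"
  unfolding L2_fun_def
proof
  show "integrable M (\<lambda>x. (norm (f x))\<^sup>2)"
  proof (rule Bochner_Integration.integrable_bound)
    show "integrable M (\<lambda>x. K\<^sup>2)" using assms(1) by (rule finite_measure.integrable_const)
    show "AE x in M. norm ((norm (f x))\<^sup>2) \<le> norm (K\<^sup>2)"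
      using assms(3) by eventually_elim (simp add: power_mono)
  qed (use meas in measurable)
qed (rule meas)

lemma integrable_norm_L2:
  assumes "finite_measure M" and w: "L2_fun M w"
  shows "integrable M (\<lambda>x. norm (w x))"
proof (rule Bochner_Integration.integrable_bound)
  show "integrable M (\<lambda>x. 1 + (norm (w x))\<^sup>2)"
    using assms by (simp add: finite_measure.integrable_const L2_fun_def)
  have "w \<in> borel_measurable M" using w by (simp add: L2_fun_def)
  then show "(\<lambda>x. norm (w x)) \<in> borel_measurable M" by measurable
  have "norm (w x) \<le> 1 + (norm (w x))\<^sup>2" for x
  proof -
    have "2 * norm (w x) \<le> (norm (w x))\<^sup>2 + 1" using sum_squares_bound[of "norm (w x)" 1] by simp
    then show ?thesis using norm_ge_zero[of "w x"] by linarith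
  qed
  then show "AE x in M. norm (norm (w x)) \<le> norm (1 + (norm (w x))\<^sup>2)" by simp
qed

lemma borel_measurable_vec_components:
  fixes f :: "'a \<Rightarrow> complex^'n"
  assumes "\<And>i. (\<lambda>x. f x $ i) \<in> borel_measurable M"
  shows "f \<in> borel_measurable M"
proof (rule borel_measurable_euclidean_space[THEN iffD2], intro ballI)
  fix b :: "complex^'n" assume "b \<in> Basis"
  then obtain i u where u: "u \<in> Basis" "b = axis i u" unfolding Basis_vec_def by auto
  have "(\<lambda>x. f x $ i \<bullet> u) \<in> borel_measurable M"
    using assms by (intro borel_measurable_inner) simp_all
  then show "(\<lambda>x. f x \<bullet> b) \<in> borel_measurable M" using u by (simp add: inner_axis)
qed

lemma integrable_cnj_mult_L2:
  assumes f: "L2_fun M f" and g: "L2_fun M g"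
  shows "integrable M (\<lambda>x. cnj (f x $ i) * g x $ j)"
proof (rule Bochner_Integration.integrable_bound)
  show "integrable M (\<lambda>x. (norm (f x))\<^sup>2 + (norm (g x))\<^sup>2)"
    using f g unfolding L2_fun_def by simp
  have "(\<lambda>x. cnj (f x $ i)) \<in> borel_measurable M"
    by (intro borel_measurable_continuous_on[where f = cnj] L2_fun_component_measurable[OF f])
      (intro continuous_intros)
  then show "(\<lambda>x. cnj (f x $ i) * g x $ j) \<in> borel_measurable M"
    using L2_fun_component_measurable[OF g] by (rule borel_measurable_times)
  have "norm (cnj (f x $ i) * g x $ j) \<le> (norm (f x))\<^sup>2 + (norm (g x))\<^sup>2" for x
  proof -
    have "norm (cnj (f x $ i) * g x $ j) \<le> norm (f x) * norm (g x)"
      by (simp add: norm_mult) (intro mult_mono Finite_Cartesian_Product.norm_nth_le norm_ge_zero)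
    also have "\<dots> \<le> (norm (f x))\<^sup>2 + (norm (g x))\<^sup>2"
    proof -
      have "2 * (norm (f x) * norm (g x)) \<le> (norm (f x))\<^sup>2 + (norm (g x))\<^sup>2"
        using sum_squares_bound[of "norm (f x)" "norm (g x)"] by (simp only: mult.assoc)
      moreover have "0 \<le> norm (f x) * norm (g x)" by simp
      ultimately show ?thesis by linarith
    qed
    finally show ?thesis .
  qed
  then show "AE x in M. norm (cnj (f x $ i) * g x $ j) \<le> norm ((norm (f x))\<^sup>2 + (norm (g x))\<^sup>2)"
    by simp
qed

lemma cadj_outer_int: "cadj (outer_int M f g) = outer_int M g f"
proof -
  have "cnj (LINT r|M. cnj (f r $ j) * g r $ i) = (LINT r|M. cnj (g r $ i) * f r $ j)" for i j
  proof -
    have "cnj (LINT r|M. cnj (f r $ j) * g r $ i) = (LINT r|M. cnj (cnj (f r $ j) * g r $ i))"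
      by (rule Bochner_Integration.integral_cnj[symmetric])
    then show ?thesis by (simp add: mult.commute)
  qed
  then show ?thesis by (simp add: vec_eq_iff outer_int_def)
qed

lemma outer_int_diff_left:
  assumes "L2_fun M f" and "L2_fun M f'" and "L2_fun M g"
  shows "outer_int M (\<lambda>r. f r - f' r) g = outer_int M f g - outer_int M f' g"
  using assms
  by (simp add: vec_eq_iff outer_int_def left_diff_distrib integrable_cnj_mult_L2
      flip: Bochner_Integration.integral_diff)

lemma outer_int_diff_right:
  assumes "L2_fun M f" and "L2_fun M g" and "L2_fun M g'"
  shows "outer_int M f (\<lambda>r. g r - g' r) = outer_int M f g - outer_int M f g'"
proof -
  have "outer_int M f (\<lambda>r. g r - g' r) = cadj (outer_int M (\<lambda>r. g r - g' r) f)"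
    by (simp only: cadj_outer_int)
  also have "\<dots> = cadj (outer_int M g f - outer_int M g' f)"
    by (simp only: outer_int_diff_left[OF assms(2,3,1)])
  also have "\<dots> = outer_int M f g - outer_int M f g'"
    by (simp only: cadj_diff cadj_outer_int)
  finally show ?thesis .
qed

lemma outer_int_mult_right:
  assumes f: "L2_fun M f" and g: "L2_fun M g"
  shows "outer_int M f (\<lambda>r. g r v* A) = outer_int M f g ** A"
proof -
  have "(LINT r|M. cnj (f r $ i) * (g r v* A) $ j) =
        (\<Sum>p\<in>UNIV. (LINT r|M. cnj (f r $ i) * g r $ p) * A$p$j)" for i j
  proof -
    have "(LINT r|M. cnj (f r $ i) * (g r v* A) $ j) =
          (LINT r|M. (\<Sum>p\<in>UNIV. cnj (f r $ i) * g r $ p * A$p$j))"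
      by (simp add: vector_matrix_mult_def sum_distrib_left mult.assoc)
    also have "\<dots> = (\<Sum>p\<in>UNIV. (LINT r|M. cnj (f r $ i) * g r $ p) * A$p$j)"
      using integrable_cnj_mult_L2[OF f g] by simp
    finally show ?thesis .
  qed
  then show ?thesis by (simp add: vec_eq_iff outer_int_def matrix_matrix_mult_def)
qed

lemma outer_int_mult_left:
  assumes "L2_fun M f" and "L2_fun M g"
  shows "outer_int M (\<lambda>r. f r v* A) g = cadj A ** outer_int M f g"
  by (metis assms cadj_matrix_mult cadj_outer_int outer_int_mult_right)

text \<open>\<open>x\<^sup>H (\<integral> f\<^sup>H f) x = \<integral> |f x|\<^sup>2\<close>, where \<open>f x\<close> is the scalar \<open>\<Sum>\<^sub>j f\<^sub>j x\<^sub>j\<close>.\<close>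

lemma qform_outer_int_nonneg:
  assumes f: "L2_fun M f"
  shows "0 \<le> qform (outer_int M f f) x"
proof -
  define phi where "phi r = (\<Sum>j\<in>UNIV. f r $ j * x $ j)" for r
  have int: "integrable M (\<lambda>r. cnj (x$i) * x$j * (cnj (f r $ i) * f r $ j))" for i j
    using integrable_cnj_mult_L2[OF f f] by simp
  have "cinner x (outer_int M f f *v x) =
      (\<Sum>i\<in>UNIV. \<Sum>j\<in>UNIV. (LINT r|M. cnj (x$i) * x$j * (cnj (f r $ i) * f r $ j)))"
    by (simp add: cinner_def matrix_vector_mult_def outer_int_def sum_distrib_left mult_ac)
  also have "\<dots> = (LINT r|M. (\<Sum>i\<in>UNIV. \<Sum>j\<in>UNIV. cnj (x$i) * x$j * (cnj (f r $ i) * f r $ j)))"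
    using int by simp
  also have "\<dots> = (LINT r|M. complex_of_real ((cmod (phi r))\<^sup>2))"
  proof (rule Bochner_Integration.integral_cong)
    fix r
    have "complex_of_real ((cmod (phi r))\<^sup>2) = (\<Sum>i\<in>UNIV. cnj (f r $ i * x $ i)) * phi r"
      unfolding complex_norm_square by (simp add: phi_def mult.commute)
    also have "\<dots> = (\<Sum>i\<in>UNIV. \<Sum>j\<in>UNIV. cnj (x$i) * x$j * (cnj (f r $ i) * f r $ j))"
      unfolding phi_def sum_product by (intro sum.cong refl) (simp only: complex_cnj_mult ac_simps)
    finally show "(\<Sum>i\<in>UNIV. \<Sum>j\<in>UNIV. cnj (x$i) * x$j * (cnj (f r $ i) * f r $ j)) =
      complex_of_real ((cmod (phi r))\<^sup>2)" by simp
  qed simp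
  also have "\<dots> = complex_of_real (LINT r|M. (cmod (phi r))\<^sup>2)"
    by (rule integral_complex_of_real)
  finally show ?thesis by (simp add: qform_def)
qed

section \<open>Rectangular apertures\<close>

lemma rect_aperture_measure:
  assumes "rect_aperture S M"
  shows "finite_measure M" and "AE x in M. x \<in> S"
proof -
  obtain c u v a b where
    S: "S = rect_param c u v ` ({0..a} \<times> {0..b})" and
    M: "M = distr (restrict_space lborel ({0..a} \<times> {0..b})) borel (rect_param c u v)"
    using assms unfolding rect_aperture_def by blast
  define R :: "(real \<times> real) set" where "R = {0..a} \<times> {0..b}"
  have "continuous_on UNIV (rect_param c u v)"
    unfolding rect_param_def split_beta' by (intro continuous_intros)
  then have "rect_param c u v \<in> borel_measurable borel"
    by (rule borel_measurable_continuous_onI)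
  then have mR: "rect_param c u v \<in> restrict_space lborel R \<rightarrow>\<^sub>M borel"
    by (intro measurable_restrict_space1) simp
  have cR: "compact R" unfolding R_def by (intro compact_Times compact_Icc)
  then have "emeasure lborel R < \<infinity>" by (intro emeasure_bounded_finite compact_imp_bounded)
  then have "finite_measure (restrict_space lborel R)"
    using cR by (intro finite_measureI) (simp add: emeasure_restrict_space compact_imp_closed
        space_restrict_space)
  then show "finite_measure M" unfolding M R_def[symmetric] using mR
    by (rule finite_measure.finite_measure_distr)
  have "AE x in restrict_space lborel R. rect_param c u v x \<in> S"
    by (rule AE_I2) (simp add: S R_def space_restrict_space)
  moreover have "compact S" unfolding S R_def[symmetric]
    using cR \<open>continuous_on UNIV (rect_param c u v)\<close> by (metis compact_continuous_image
        continuous_on_subset top_greatest)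
  ultimately show "AE x in M. x \<in> S"
    unfolding M R_def[symmetric] using mR
    by (subst AE_distr_iff) (auto intro: borel_closed compact_imp_closed)
qed

lemma eff_measurable:
  assumes MT: "sigma_finite_measure MT" and h: "(\<lambda>(r, s). h r s) \<in> borel_measurable (MR \<Otimes>\<^sub>M MT)"
    and w: "L2_fun MT w"
  shows "eff MT h w \<in> borel_measurable MR"
proof (rule borel_measurable_vec_components)
  fix i
  have "(\<lambda>(r, s). h r s * w s $ i) \<in> borel_measurable (MR \<Otimes>\<^sub>M MT)"
    using h L2_fun_component_measurable[OF w, of i] by (simp add: split_beta') measurable
  then show "(\<lambda>r. eff MT h w r $ i) \<in> borel_measurable MR"
    unfolding eff_def
    using sigma_finite_measure.borel_measurable_lebesgue_integral[OF MT] by simp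
qed

lemma norm_eff_le:
  fixes w :: "'a \<Rightarrow> complex^'n"
  assumes h: "\<And>s. s \<in> ST \<Longrightarrow> norm (h r s) \<le> B" and "0 \<le> B"
    and ST: "AE s in MT. s \<in> ST" and w: "integrable MT (\<lambda>s. norm (w s))"
  shows "norm (eff MT h w r) \<le> real CARD('n) * (B * (LINT s|MT. norm (w s)))"
proof -
  have comp: "norm (eff MT h w r $ i) \<le> B * (LINT s|MT. norm (w s))" for i
  proof -
    have "norm (eff MT h w r $ i) \<le> (LINT s|MT. norm (h r s * w s $ i))"
      unfolding eff_def by simp
    also have "\<dots> \<le> (LINT s|MT. B * norm (w s))"
    proof (rule integral_mono_AE')
      show "AE s in MT. norm (h r s * w s $ i) \<le> B * norm (w s)"
        using ST by eventually_elim
          (simp add: norm_mult mult_mono h \<open>0 \<le> B\<close> Finite_Cartesian_Product.norm_nth_le)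
    qed (use w \<open>0 \<le> B\<close> in auto)
    finally show ?thesis by simp
  qed
  have "(\<Sum>i\<in>UNIV. norm (eff MT h w r $ i)) \<le> (\<Sum>i\<in>(UNIV::'n set). B * (LINT s|MT. norm (w s)))"
    by (rule sum_mono) (rule comp)
  then have "(\<Sum>i\<in>UNIV. norm (eff MT h w r $ i)) \<le> real CARD('n) * (B * (LINT s|MT. norm (w s)))"
    by simp
  moreover have "norm (eff MT h w r) \<le> (\<Sum>i\<in>UNIV. norm (eff MT h w r $ i))"
    unfolding norm_vec_def by (rule L2_set_le_sum) simp
  ultimately show ?thesis by linarith
qed

lemma L2_fun_eff:
  fixes w :: "'a \<Rightarrow> complex^'n"
  assumes MT: "finite_measure MT" and MR: "finite_measure MR"
    and h: "(\<lambda>(r, s). h r s) \<in> borel_measurable (MR \<Otimes>\<^sub>M MT)"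
    and B: "\<And>r s. r \<in> SR \<Longrightarrow> s \<in> ST \<Longrightarrow> norm (h r s) \<le> B"
    and SR: "AE r in MR. r \<in> SR" and ST: "AE s in MT. s \<in> ST"
    and w: "L2_fun MT w"
  shows "L2_fun MR (eff MT h w)"
proof (rule L2_fun_bounded[OF MR])
  show "eff MT h w \<in> borel_measurable MR"
    using MT h w by (intro eff_measurable) (simp add: finite_measure_def)
  have "norm (eff MT h w r) \<le> real CARD('n) * (max B 0 * (LINT s|MT. norm (w s)))"
    if "r \<in> SR" for r
    using B[OF that] by (intro norm_eff_le[OF _ _ ST integrable_norm_L2[OF MT w]]) (auto intro: max.coboundedI1)
  with SR show "AE r in MR. norm (eff MT h w r) \<le> real CARD('n) * (max B 0 * (LINT s|MT. norm (w s)))"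
    by (rule eventually_mono)
qed

section \<open>The WMMSE reformulation\<close>

text \<open>Completing the square: for a receiver \<open>v = e P + D\<close> with \<open>P = (Q + c I)\<^sup>-\<^sup>1\<close> one has
  \<open>\<integral> v\<^sup>H e = P Q + K\<close> and \<open>\<integral> v\<^sup>H v = P Q P + K P + P K\<^sup>H + W\<close>, where \<open>K = \<integral> D\<^sup>H e\<close> and
  \<open>W = \<integral> D\<^sup>H D\<close>.\<close>

lemma mse_completion_of_square:
  fixes P Q K W :: "complex^'n^'n" and c :: real
  assumes PQ: "P ** (Q + c *\<^sub>R mat 1) = mat 1" and hP: "cadj P = P"
  shows "(mat 1 - (P ** Q + K)) ** cadj (mat 1 - (P ** Q + K))
           + c *\<^sub>R (P ** Q ** P + K ** P + P ** cadj K + W)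
         = c *\<^sub>R P + K ** cadj K + c *\<^sub>R W"
proof -
  have PQ': "P ** Q = mat 1 - c *\<^sub>R P"
    using PQ by (simp add: matrix_add_ldistrib matrix_scalar_ac algebra_simps)
  have D: "mat 1 - (P ** Q + K) = c *\<^sub>R P - K" by (simp add: PQ')
  have Dh: "cadj (c *\<^sub>R P - K) = c *\<^sub>R P - cadj K" by (simp add: cadj_diff cadj_scaleR hP)
  have PQP: "P ** Q ** P = P - c *\<^sub>R (P ** P)"
    by (simp add: PQ' matrix_diff_rdistrib scalar_matrix_assoc[symmetric])
  have "(c *\<^sub>R P - K) ** (c *\<^sub>R P - cadj K) =
      (c * c) *\<^sub>R (P ** P) - c *\<^sub>R (P ** cadj K) - c *\<^sub>R (K ** P) + K ** cadj K"
    by (simp add: matrix_diff_ldistrib matrix_diff_rdistrib matrix_scalar_ac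
        scalar_matrix_assoc[symmetric] algebra_simps)
  then show ?thesis
    unfolding D Dh PQP by (simp add: algebra_simps)
qed

locale wmmse_setup =
  fixes PT sigma2 :: real and MR :: "'b measure" and MT :: "'a measure"
    and h :: "'b \<Rightarrow> 'a \<Rightarrow> complex" and w :: "'a \<Rightarrow> complex^'n"
  assumes L2_eff: "L2_fun MR (eff MT h w)"
    and sig_tilde_pos: "0 < sig_tilde PT sigma2 MT w"
begin

abbreviation "e \<equiv> eff MT h w"
abbreviation "sigt \<equiv> sig_tilde PT sigma2 MT w"
abbreviation "Q \<equiv> Qmat MR MT h w"

text \<open>\<open>P = (Q + sigt I)\<^sup>-\<^sup>1\<close>; \<open>v_opt\<close> is the MMSE receiver and \<open>E_opt = U_opt\<^sup>-\<^sup>1\<close> its MSE matrix.\<close>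

definition U_opt :: "complex^'n^'n" where
  "U_opt = mat 1 + (1 / sigt) *\<^sub>R Q"

definition P :: "complex^'n^'n" where
  "P = matrix_inv (Q + sigt *\<^sub>R mat 1)"

definition E_opt :: "complex^'n^'n" where
  "E_opt = sigt *\<^sub>R P"

definition v_opt :: "'b \<Rightarrow> complex^'n" where
  "v_opt r = e r v* P"

lemma rate_obj_eq: "rate_obj PT sigma2 MR MT h w = ln (Re (det U_opt))"
  by (simp add: rate_obj_def U_opt_def)

lemma pos_def_U_opt: "pos_def U_opt"
  unfolding U_opt_def Qmat_def
  using sig_tilde_pos qform_outer_int_nonneg[OF L2_eff]
  by (intro pos_def_id_plus) (simp_all add: hermitian_def cadj_outer_int)

lemma Q_plus_sigt_eq: "Q + sigt *\<^sub>R mat 1 = sigt *\<^sub>R U_opt"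
  using sig_tilde_pos by (simp add: U_opt_def algebra_simps)

lemma P_right_inverse: "(Q + sigt *\<^sub>R mat 1) ** P = mat 1"
proof -
  have "pos_def (Q + sigt *\<^sub>R mat 1)"
    unfolding Q_plus_sigt_eq using pos_def_U_opt sig_tilde_pos by (rule pos_def_scaleR)
  then obtain B where "(Q + sigt *\<^sub>R mat 1) ** B = mat 1" by (rule pos_def_right_inverse)
  then show ?thesis unfolding P_def by (metis invertible_right_inverse matrix_inv_right)
qed

lemma P_left_inverse: "P ** (Q + sigt *\<^sub>R mat 1) = mat 1"
  using P_right_inverse matrix_left_right_inverse by blast

lemma U_opt_inverse: "U_opt ** E_opt = mat 1"
  using P_right_inverse by (simp add: E_opt_def Q_plus_sigt_eq matrix_scalar_ac)

lemma pos_def_E_opt: "pos_def E_opt"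
  by (rule pos_def_inverse[OF pos_def_U_opt U_opt_inverse])

lemma hermitian_P: "cadj P = P"
proof -
  have "hermitian (sigt *\<^sub>R P)" using pos_def_E_opt by (simp add: pos_def_def E_opt_def)
  then show ?thesis using sig_tilde_pos by (simp add: hermitian_def cadj_scaleR)
qed

lemma L2_v_opt: "L2_fun MR v_opt"
  unfolding v_opt_def
  by (rule L2_fun_bounded_linear[OF _ L2_eff]) (simp flip: transpose_matrix_vector)

lemma mse_mat_decomposition:
  assumes v: "L2_fun MR v"
  defines "D \<equiv> \<lambda>r. v r - v_opt r"
  shows "mse_mat PT sigma2 MR MT h w v =
           E_opt + outer_int MR D e ** cadj (outer_int MR D e) + sigt *\<^sub>R outer_int MR D D"
proof -
  have DL: "L2_fun MR D" unfolding D_def by (rule L2_fun_diff[OF v L2_v_opt])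
  define K where "K = outer_int MR D e"
  have "outer_int MR v_opt e = P ** Q"
    unfolding v_opt_def Qmat_def using outer_int_mult_left[OF L2_eff L2_eff, of P]
    by (simp add: hermitian_P)
  then have G: "outer_int MR v e = P ** Q + K"
    using outer_int_diff_left[OF v L2_v_opt L2_eff] by (simp add: K_def D_def)
  have KP: "outer_int MR D v_opt = K ** P"
    unfolding v_opt_def K_def by (rule outer_int_mult_right[OF DL L2_eff])
  have "outer_int MR v_opt D = P ** cadj K"
    by (metis KP cadj_matrix_mult cadj_outer_int hermitian_P)
  moreover have "outer_int MR v v_opt = P ** Q ** P + K ** P"
    using outer_int_mult_right[OF v L2_eff, of P] by (simp add: v_opt_def[abs_def] G matrix_add_rdistrib)
  moreover have "outer_int MR v v = outer_int MR v D + outer_int MR v v_opt"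
    and "outer_int MR v D = outer_int MR D D + outer_int MR v_opt D"
    using outer_int_diff_right[OF v v L2_v_opt] outer_int_diff_left[OF v L2_v_opt DL]
    by (simp_all add: D_def)
  ultimately have V: "outer_int MR v v = P ** Q ** P + K ** P + P ** cadj K + outer_int MR D D"
    by (simp add: ac_simps)
  show ?thesis
    unfolding mse_mat_def Let_def G V K_def[symmetric] E_opt_def
    by (rule mse_completion_of_square[OF P_left_inverse hermitian_P])
qed

lemma mse_mat_v_opt: "mse_mat PT sigma2 MR MT h w v_opt = E_opt"
proof -
  have "outer_int MR (\<lambda>r. v_opt r - v_opt r) g = 0" for g :: "'b \<Rightarrow> complex^'n"
    by (simp add: outer_int_def vec_eq_iff)
  then show ?thesis using mse_mat_decomposition[OF L2_v_opt] by simp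
qed

lemma qform_mse_mat_ge:
  assumes "L2_fun MR v"
  shows "qform E_opt x \<le> qform (mse_mat PT sigma2 MR MT h w v) x"
  using sig_tilde_pos L2_fun_diff[OF assms L2_v_opt]
  by (intro qform_le_add_gram[OF mse_mat_decomposition[OF assms]] qform_outer_int_nonneg) auto

lemma wmmse_obj_ge:
  assumes "L2_fun MR v" and "pos_def U"
  shows "real CARD('n) - rate_obj PT sigma2 MR MT h w \<le> wmmse_obj PT sigma2 MR MT h w v U"
proof -
  have "real CARD('n) + ln (Re (det E_opt)) \<le> Re (trace (U ** E_opt)) - ln (Re (det U))"
    by (rule trace_ln_det_lower_bound[OF assms(2) pos_def_E_opt])
  also have "\<dots> \<le> Re (trace (U ** mse_mat PT sigma2 MR MT h w v)) - ln (Re (det U))"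
    using trace_mult_mono[OF assms(2) qform_mse_mat_ge[OF assms(1)]] by simp
  finally show ?thesis
    by (simp add: wmmse_obj_def rate_obj_eq ln_det_inverse[OF pos_def_U_opt U_opt_inverse])
qed

lemma wmmse_obj_opt:
  "wmmse_obj PT sigma2 MR MT h w v_opt U_opt = real CARD('n) - rate_obj PT sigma2 MR MT h w"
  by (simp add: wmmse_obj_def rate_obj_eq mse_mat_v_opt U_opt_inverse trace_I)

end

lemma argmax_eq_joint_argmin:
  fixes f :: "'w \<Rightarrow> real" and g :: "'w \<Rightarrow> 'v \<Rightarrow> 'u \<Rightarrow> real"
  assumes attained: "\<And>w. A w \<Longrightarrow> \<exists>v u. B v \<and> C u \<and> g w v u = c - f w"
    and lower: "\<And>w v u. A w \<Longrightarrow> B v \<Longrightarrow> C u \<Longrightarrow> c - f w \<le> g w v u"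
  shows "{w. A w \<and> (\<forall>w'. A w' \<longrightarrow> f w' \<le> f w)} =
         {w. A w \<and> (\<exists>v u. B v \<and> C u \<and> (\<forall>w' v' u'. A w' \<and> B v' \<and> C u' \<longrightarrow> g w v u \<le> g w' v' u'))}"
proof -
  have "\<exists>v u. B v \<and> C u \<and> (\<forall>w' v' u'. A w' \<and> B v' \<and> C u' \<longrightarrow> g w v u \<le> g w' v' u')"
    if w: "A w" and max: "\<forall>w'. A w' \<longrightarrow> f w' \<le> f w" for w
  proof -
    obtain v u where vu: "B v" "C u" "g w v u = c - f w" using attained[OF w] by blast
    have "g w v u \<le> g w' v' u'" if "A w'" "B v'" "C u'" for w' v' u'
      using max lower[OF that] that(1) vu(3) by fastforce
    with vu show ?thesis by blast
  qed
  moreover have "f w' \<le> f w"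
    if w: "A w" "B v" "C u" and min: "\<forall>w' v' u'. A w' \<and> B v' \<and> C u' \<longrightarrow> g w v u \<le> g w' v' u'"
      and w': "A w'" for w v u w'
  proof -
    obtain v' u' where "B v'" "C u'" "g w' v' u' = c - f w'" using attained[OF w'] by blast
    then show ?thesis using lower[OF w] min w' by fastforce
  qed
  ultimately show ?thesis by blast
qed

theorem theorem2:
  fixes PT sigma2 :: real
    and ST SR :: "(real^3) set" and MT MR :: "(real^3) measure"
    and h :: "real^3 \<Rightarrow> real^3 \<Rightarrow> complex"
  assumes "PT > 0" and "sigma2 > 0"
    and "rect_aperture ST MT" and "rect_aperture SR MR"
    and "\<exists>B. \<forall>r\<in>SR. \<forall>s\<in>ST. norm (h r s) \<le> B"
    and "(\<lambda>(r, s). h r s) \<in> borel_measurable (MR \<Otimes>\<^sub>M MT)"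
  shows "{w :: real^3 \<Rightarrow> complex^'n. admissible_bf MT w \<and>
            (\<forall>w' :: real^3 \<Rightarrow> complex^'n. admissible_bf MT w' \<longrightarrow> rate_obj PT sigma2 MR MT h w' \<le> rate_obj PT sigma2 MR MT h w)}
       = {w :: real^3 \<Rightarrow> complex^'n. admissible_bf MT w \<and>
            (\<exists>(v :: real^3 \<Rightarrow> complex^'n) (U :: complex^'n^'n). L2_fun MR v \<and> pos_def U \<and>
               (\<forall>(w' :: real^3 \<Rightarrow> complex^'n) (v' :: real^3 \<Rightarrow> complex^'n) (U' :: complex^'n^'n).
                  admissible_bf MT w' \<and> L2_fun MR v' \<and> pos_def U' \<longrightarrow>
                  wmmse_obj PT sigma2 MR MT h w v U \<le> wmmse_obj PT sigma2 MR MT h w' v' U'))}"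
proof -
  obtain B where B: "\<And>r s. r \<in> SR \<Longrightarrow> s \<in> ST \<Longrightarrow> norm (h r s) \<le> B"
    using assms(5) by blast
  have admissible_setup: "wmmse_setup PT sigma2 MR MT h w"
    if "admissible_bf MT w" for w :: "real^3 \<Rightarrow> complex^'n"
  proof
    show "L2_fun MR (eff MT h w)"
      using that rect_aperture_measure[OF assms(3)] rect_aperture_measure[OF assms(4)]
      by (intro L2_fun_eff[OF _ _ assms(6) B]) (auto simp: admissible_bf_def)
    show "0 < sig_tilde PT sigma2 MT w"
      using that assms(1,2) by (simp add: admissible_bf_def sig_tilde_def)
  qed
  show ?thesis
  proof (rule argmax_eq_joint_argmin[where c = "real CARD('n)"])
    fix w :: "real^3 \<Rightarrow> complex^'n" assume "admissible_bf MT w"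
    then interpret wmmse_setup PT sigma2 MR MT h w by (rule admissible_setup)
    show "\<exists>v U. L2_fun MR v \<and> pos_def U \<and>
        wmmse_obj PT sigma2 MR MT h w v U = real CARD('n) - rate_obj PT sigma2 MR MT h w"
      using L2_v_opt pos_def_U_opt wmmse_obj_opt by blast
  next
    fix w v :: "real^3 \<Rightarrow> complex^'n" and U :: "complex^'n^'n"
    assume "admissible_bf MT w" "L2_fun MR v" "pos_def U"
    then show "real CARD('n) - rate_obj PT sigma2 MR MT h w \<le> wmmse_obj PT sigma2 MR MT h w v U"
      using wmmse_setup.wmmse_obj_ge[OF admissible_setup] by blast
  qed
qed

end
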